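(* $\mathfrak{L}(V)=\mathfrak{L}^-(V)$ if and only if $p_{ii}^2=1$ for all $i$ and $p_{ij}=p_{ji}=1$ for all $1\le i\neq j\le n$. In this case $\mathfrak{L}(V)=\mathfrak{L}^-(V)=V$.
   Context: $V$ is a braided vector space of diagonal type over an algebraically closed field $F$ of characteristic $0$ with basis $x_1,\dots,x_n$, braiding $C(x_i\otimes x_j)=q_{ij}x_j\otimes x_i$, Nichols algebra $\mathfrak{B}(V)$ ($\mathbb{Z}^n$-graded, $\deg x_i=e_i$); $\chi(e_i,e_j)=q_{ij}$, $p_{ij}:=q_{ij}$, $p_{uv}:=\chi(\deg u,\deg v)$. For homogeneous $x,y$, $[x,y]:=yx-p_{yx}xy$; $\mathfrak{L}(V)$ is the linear span in $\mathfrak{B}(V)$ of all iterated brackets $[\,,\,]$ (any bracketing) of $x_1,\dots,x_n$. The Nichols Lie algebra $\mathfrak{L}^-(V)$ is the Lie subalgebra of $\mathfrak{B}(V)$ generated by $V$ under the commutator $[a,b]^-=ab-ba$ (i.e. the span of all iterated commutators of $x_1,\dots,x_n$). *)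

theory Defs
  imports "HOL-Combinatorics.Permutations" "HOL-Computational_Algebra.Polynomial"
begin

text \<open>Elements of the tensor algebra T(V), V with basis x_0,...,x_(n-1), are
coefficient functions on words (lists of indices).\<close>
type_synonym 'a tens = "nat list \<Rightarrow> 'a"

definition tzero :: "'a::comm_ring_1 tens" where
  "tzero = (\<lambda>w. 0)"

definition tadd :: "'a::comm_ring_1 tens \<Rightarrow> 'a tens \<Rightarrow> 'a tens" where
  "tadd f g = (\<lambda>w. f w + g w)"

definition tsmul :: "'a::comm_ring_1 \<Rightarrow> 'a tens \<Rightarrow> 'a tens" where
  "tsmul c f = (\<lambda>w. c * f w)"

definition tmul :: "'a::comm_ring_1 tens \<Rightarrow> 'a tens \<Rightarrow> 'a tens" where
  "tmul f g = (\<lambda>w. \<Sum>k\<le>length w. f (take k w) * g (drop k w))"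

definition gen :: "nat \<Rightarrow> 'a::comm_ring_1 tens" where
  "gen i = (\<lambda>w. if w = [i] then 1 else 0)"

text \<open>Quantum symmetrizer Omega of the diagonal braiding c(x_i x_j) = q i j x_j x_i,
  summed over all degrees; the Nichols algebra is T(V) / ker Omega, so the
  image of u in B(V) is identified with symm q u.  In the word u, the letter at
  position a is moved to position sigma a; each inversion of letters i (left) and
  j (right) contributes q i j.\<close>
definition symm :: "(nat \<Rightarrow> nat \<Rightarrow> 'a::comm_ring_1) \<Rightarrow> 'a tens \<Rightarrow> 'a tens" where
  "symm q f = (\<lambda>w. \<Sum>\<sigma> \<in> {\<sigma>. \<sigma> permutes {..<length w}}.
      (\<Prod>(a,b) \<in> {(a,b). a < b \<and> b < length w \<and> \<sigma> b < \<sigma> a}. q (w ! \<sigma> a) (w ! \<sigma> b))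
      * f (map (\<lambda>a. w ! \<sigma> a) [0..<length w]))"

datatype btree = Leaf nat | Node btree btree

fun leaves :: "btree \<Rightarrow> nat list" where
  "leaves (Leaf i) = [i]"
| "leaves (Node s t) = leaves s @ leaves t"

definition chi :: "(nat \<Rightarrow> nat \<Rightarrow> 'a::comm_ring_1) \<Rightarrow> btree \<Rightarrow> btree \<Rightarrow> 'a" where
  "chi q s t = prod_list [q a b. a \<leftarrow> leaves s, b \<leftarrow> leaves t]"

fun brack :: "(nat \<Rightarrow> nat \<Rightarrow> 'a::comm_ring_1) \<Rightarrow> btree \<Rightarrow> 'a tens" where
  "brack q (Leaf i) = gen i"
| "brack q (Node s t) =
     tadd (tmul (brack q t) (brack q s)) (tsmul (- chi q t s) (tmul (brack q s) (brack q t)))"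

fun commt :: "btree \<Rightarrow> 'a::comm_ring_1 tens" where
  "commt (Leaf i) = gen i"
| "commt (Node s t) = tadd (tmul (commt s) (commt t)) (tsmul (- 1) (tmul (commt t) (commt s)))"

inductive_set lspan :: "'a::comm_ring_1 tens set \<Rightarrow> 'a tens set" for S where
  lspan_zero: "tzero \<in> lspan S"
| lspan_step: "x \<in> S \<Longrightarrow> y \<in> lspan S \<Longrightarrow> tadd (tsmul c x) y \<in> lspan S"

text \<open>Subspaces of B(V), as images in T(V) under the symmetrizer.\<close>
definition NicholsL :: "(nat \<Rightarrow> nat \<Rightarrow> 'a::comm_ring_1) \<Rightarrow> nat \<Rightarrow> 'a tens set" where
  "NicholsL q n = symm q ` lspan {brack q t | t. set (leaves t) \<subseteq> {..<n}}"

definition NicholsLminus :: "(nat \<Rightarrow> nat \<Rightarrow> 'a::comm_ring_1) \<Rightarrow> nat \<Rightarrow> 'a tens set" where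
  "NicholsLminus q n = symm q ` lspan {commt t | t. set (leaves t) \<subseteq> {..<n}}"

definition NicholsV :: "(nat \<Rightarrow> nat \<Rightarrow> 'a::comm_ring_1) \<Rightarrow> nat \<Rightarrow> 'a tens set" where
  "NicholsV q n = symm q ` lspan {gen i | i. i < n}"

definition alg_closed :: "'a::field itself \<Rightarrow> bool" where
  "alg_closed _ = (\<forall>p :: 'a poly. 0 < degree p \<longrightarrow> (\<exists>x. poly p x = 0))"

end

theory Submission
  imports Defs
begin

text \<open>In degree two the symmetrizer is \<open>f [x, y] + q y x * f [y, x]\<close>. Commutators are
  antisymmetric on words of length two, whereas the braided bracket of \<open>x\<^sub>b\<close> and \<open>x\<^sub>a\<close> has
  image \<open>1 - q a b * q b a\<close> at \<open>[a, b]\<close>; comparing the two spans at \<open>[a, b]\<close> and \<open>[b, a]\<close>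
  forces \<open>q a b * q b a = 1\<close>, after which the braided brackets vanish in degree two and the
  commutator of \<open>x\<^sub>a\<close> and \<open>x\<^sub>b\<close> (image \<open>1 - q b a\<close>) forces \<open>q b a = 1\<close> for \<open>a \<noteq> b\<close>.

  Conversely, under these conditions every permutation enters the symmetrizer with
  coefficient \<open>1\<close>, unless the word contains a letter \<open>a\<close> with \<open>q a a = -1\<close> twice; then
  composing with the transposition of two such occurrences reverses the sign of every
  coefficient and the symmetrizer vanishes. A plain sum over all permutations is invariant
  under rotating the word, so it does not distinguish \<open>u v\<close> from \<open>v u\<close>. Hence the
  symmetrizer kills every commutator of degree at least two, and every braided bracket
  \<open>v u - \<chi> u v\<close> as well: if \<open>\<chi> \<noteq> 1\<close> the two factors share a letter \<open>a\<close> with \<open>q a a = -1\<close>.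
  So both spans reduce to the image of \<open>V\<close>.\<close>

lemma lspan_tadd: "x \<in> lspan S \<Longrightarrow> y \<in> lspan S \<Longrightarrow> tadd x y \<in> lspan S"
proof (induction x rule: lspan.induct)
  case lspan_zero
  then show ?case by (simp add: tadd_def tzero_def)
next
  case (lspan_step x y' c)
  have "tadd (tadd (tsmul c x) y') y = tadd (tsmul c x) (tadd y' y)"
    by (simp add: tadd_def add.assoc)
  with lspan_step show ?case by (simp add: lspan.lspan_step)
qed

lemma lspan_tsmul: "x \<in> lspan S \<Longrightarrow> tsmul c x \<in> lspan S"
proof (induction x rule: lspan.induct)
  case lspan_zero
  have "tsmul c tzero = tzero" by (simp add: tsmul_def tzero_def)
  then show ?case by (simp add: lspan.lspan_zero)
next
  case (lspan_step x y d)
  have "tsmul c (tadd (tsmul d x) y) = tadd (tsmul (c * d) x) (tsmul c y)"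
    by (simp add: tadd_def tsmul_def algebra_simps)
  with lspan_step show ?case by (simp add: lspan.lspan_step)
qed

lemma lspan_inc: "x \<in> S \<Longrightarrow> x \<in> lspan S"
  using lspan.lspan_step[OF _ lspan.lspan_zero, of x S 1]
  by (simp add: tadd_def tsmul_def tzero_def)

lemma lspan_subset_lspan: "S \<subseteq> lspan T \<Longrightarrow> lspan S \<subseteq> lspan T"
proof
  fix x assume "S \<subseteq> lspan T" and "x \<in> lspan S"
  from this(2,1) show "x \<in> lspan T"
    by (induction x rule: lspan.induct) (auto intro: lspan.lspan_zero lspan_tadd lspan_tsmul)
qed

lemma symm_tadd: "symm q (tadd f g) = tadd (symm q f) (symm q g)"
  by (simp add: symm_def tadd_def distrib_left sum.distrib fun_eq_iff)

lemma symm_tsmul: "symm q (tsmul c f) = tsmul c (symm q f)"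
  by (simp add: symm_def tsmul_def sum_distrib_left fun_eq_iff algebra_simps)

lemma symm_tzero: "symm q tzero = tzero"
  by (simp add: symm_def tzero_def fun_eq_iff)

lemma symm_image_lspan: "symm q ` lspan S = lspan (symm q ` S)"
proof
  show "symm q ` lspan S \<subseteq> lspan (symm q ` S)"
  proof
    fix y assume "y \<in> symm q ` lspan S"
    then obtain x where x: "x \<in> lspan S" "y = symm q x" by auto
    from x(1) have "symm q x \<in> lspan (symm q ` S)"
      by (induction x rule: lspan.induct)
         (auto simp: symm_tadd symm_tsmul symm_tzero intro: lspan.lspan_zero lspan.lspan_step)
    with x show "y \<in> lspan (symm q ` S)" by simp
  qed
next
  show "lspan (symm q ` S) \<subseteq> symm q ` lspan S"
  proof
    fix y assume "y \<in> lspan (symm q ` S)"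
    then show "y \<in> symm q ` lspan S"
    proof (induction y rule: lspan.induct)
      case lspan_zero
      then show ?case by (metis image_eqI lspan.lspan_zero symm_tzero)
    next
      case (lspan_step x y c)
      then obtain x0 y0 where "x0 \<in> S" "x = symm q x0" "y0 \<in> lspan S" "y = symm q y0" by auto
      then show ?case by (metis image_eqI lspan.lspan_step symm_tadd symm_tsmul)
    qed
  qed
qed

lemma tmul_nonzeroD:
  "tmul f g w \<noteq> 0 \<Longrightarrow> \<exists>k\<le>length w. f (take k w) \<noteq> 0 \<and> g (drop k w) \<noteq> 0"
  unfolding tmul_def by (metis (no_types, lifting) atMost_iff mult_not_zero sum.neutral)

lemma tmul_nonzero_mset:
  assumes "tmul f g w \<noteq> 0"
    and "\<And>v. f v \<noteq> 0 \<Longrightarrow> mset v = A" and "\<And>v. g v \<noteq> 0 \<Longrightarrow> mset v = B"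
  shows "mset w = A + B"
  using tmul_nonzeroD[OF assms(1)] assms(2,3) by (metis append_take_drop_id mset_append)

lemma brack_nonzero_mset: "brack q t w \<noteq> 0 \<Longrightarrow> mset w = mset (leaves t)"
proof (induction t arbitrary: w)
  case (Node s t)
  then have "tmul (brack q t) (brack q s) w \<noteq> 0 \<or> tmul (brack q s) (brack q t) w \<noteq> 0"
    by (auto simp: tadd_def tsmul_def)
  then show ?case
    using tmul_nonzero_mset[of "brack q t" "brack q s" w] tmul_nonzero_mset[of "brack q s" "brack q t" w]
      Node.IH by (auto simp: add.commute)
qed (auto simp: gen_def split: if_splits)

lemma commt_nonzero_mset: "(commt t :: 'a::comm_ring_1 tens) w \<noteq> 0 \<Longrightarrow> mset w = mset (leaves t)"
proof (induction t arbitrary: w)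
  case (Node s t)
  then have "tmul (commt s) (commt t :: 'a tens) w \<noteq> 0 \<or> tmul (commt t) (commt s :: 'a tens) w \<noteq> 0"
    by (auto simp: tadd_def tsmul_def)
  then show ?case
    using tmul_nonzero_mset[of "commt s :: 'a tens" "commt t" w] tmul_nonzero_mset[of "commt t :: 'a tens" "commt s" w]
      Node.IH by (auto simp: add.commute)
qed (auto simp: gen_def split: if_splits)

section \<open>Degree two\<close>

lemma permutes_lessThan_2: "{\<sigma>. \<sigma> permutes {..<2::nat}} = {id, transpose 0 1}"
proof -
  have "\<sigma> = id \<or> \<sigma> = transpose 0 1" if p: "\<sigma> permutes {..<2::nat}" for \<sigma>
  proof -
    have fix_ge_2: "\<sigma> x = x" if "x \<ge> 2" for x using p that unfolding permutes_def by auto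
    have "\<sigma> 0 < 2" "\<sigma> 1 < 2" using permutes_in_image[OF p] by auto
    moreover have "\<sigma> 0 \<noteq> \<sigma> 1" using permutes_inj[OF p] by (metis inj_eq zero_neq_one)
    ultimately have "(\<sigma> 0 = 0 \<and> \<sigma> 1 = 1) \<or> (\<sigma> 0 = 1 \<and> \<sigma> 1 = 0)" by auto
    then show ?thesis
    proof
      assume "\<sigma> 0 = 0 \<and> \<sigma> 1 = 1"
      then have "\<sigma> x = id x" for x using fix_ge_2 by (cases "x < 2") (auto simp: less_2_cases_iff)
      then show ?thesis by auto
    next
      assume "\<sigma> 0 = 1 \<and> \<sigma> 1 = 0"
      then have "\<sigma> x = transpose 0 1 x" for x
        using fix_ge_2 by (cases "x < 2") (auto simp: less_2_cases_iff transpose_def)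
      then show ?thesis by auto
    qed
  qed
  then show ?thesis using permutes_id permutes_swap_id[of 0 "{..<2::nat}" 1] by auto
qed

lemma symm_length_2: "symm q f [x, y] = f [x, y] + q y x * f [y, x]"
proof -
  have ne: "id \<noteq> (transpose 0 1 :: nat \<Rightarrow> nat)" by (metis id_apply transpose_apply_first zero_neq_one)
  have inv_id: "{(a, b). a < b \<and> b < 2 \<and> b < a} = ({} :: (nat \<times> nat) set)" by auto
  have inv_transpose: "{(a,b). a < b \<and> b < 2 \<and> transpose 0 (Suc 0) b < transpose 0 (Suc 0) a} = {(0, Suc 0)}"
    by (auto simp: transpose_def less_2_cases_iff)
  show ?thesis
    unfolding symm_def length_Cons list.size(3) numeral_2_eq_2[symmetric] permutes_lessThan_2
    using ne by (subst sum.insert) (auto simp add: upt_rec inv_id inv_transpose)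
qed

lemma length_leaves_pos: "0 < length (leaves t)"
  by (induction t) auto

lemma length_leaves_Node: "2 \<le> length (leaves (Node s r))"
  unfolding leaves.simps length_append using length_leaves_pos[of s] length_leaves_pos[of r] by linarith

lemma length_leaves_eq_1: "length (leaves t) = 1 \<Longrightarrow> \<exists>c. t = Leaf c"
proof (cases t)
  case (Node s r)
  moreover assume "length (leaves t) = 1"
  ultimately show ?thesis using length_leaves_Node[of s r] by simp
qed simp

lemma length_leaves_eq_2: "length (leaves t) = 2 \<Longrightarrow> \<exists>c d. t = Node (Leaf c) (Leaf d)"
proof (cases t)
  case (Node s r)
  moreover assume "length (leaves t) = 2"
  ultimately have "length (leaves s) + length (leaves r) = 2" by simp
  then have "length (leaves s) = 1" "length (leaves r) = 1"
    using length_leaves_pos[of s] length_leaves_pos[of r] by linarith+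
  with Node show ?thesis using length_leaves_eq_1 by blast
qed simp

lemma tmul_gen_gen_length_2:
  "tmul (gen c) (gen d) [x, y] = (if c = x \<and> d = y then 1 else (0::'a::comm_ring_1))"
  by (simp add: tmul_def gen_def numeral_2_eq_2 atMost_Suc)

lemma brack_Leaf_Leaf_length_2:
  "brack q (Node (Leaf c) (Leaf d)) [x, y] =
     (if d = x \<and> c = y then 1 else 0) - q d c * (if c = x \<and> d = y then 1 else 0)"
  by (simp add: tadd_def tsmul_def chi_def tmul_gen_gen_length_2)

lemma commt_Leaf_Leaf_length_2:
  "(commt (Node (Leaf c) (Leaf d)) :: 'a::comm_ring_1 tens) [x, y] =
     (if c = x \<and> d = y then 1 else 0) - (if d = x \<and> c = y then 1 else 0)"
  by (simp add: tadd_def tsmul_def tmul_gen_gen_length_2)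

lemma commt_length_2_antisym: "(commt t :: 'a::comm_ring_1 tens) [y, x] = - commt t [x, y]"
proof (cases "length (leaves t) = 2")
  case True
  then obtain c d where "t = Node (Leaf c) (Leaf d)" using length_leaves_eq_2 by blast
  then show ?thesis by (simp only: commt_Leaf_Leaf_length_2) (simp add: conj_commute)
next
  case False
  then have "(commt t :: 'a tens) [x, y] = 0" "(commt t :: 'a tens) [y, x] = 0"
    using commt_nonzero_mset mset_eq_length by (metis length_Cons list.size(3) numeral_2_eq_2)+
  then show ?thesis by simp
qed

lemma lspan_commt_length_2_antisym:
  "u \<in> lspan {commt t | t. P t} \<Longrightarrow> (u :: 'a::comm_ring_1 tens) [y, x] = - u [x, y]"
proof (induction u rule: lspan.induct)
  case (lspan_step a b c)
  then obtain t where "a = commt t" by auto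
  then have "a [y, x] = - a [x, y]" using commt_length_2_antisym[of t y x] by simp
  with lspan_step show ?case by (simp add: tadd_def tsmul_def)
qed (simp add: tzero_def)

lemma symm_lspan_commt_length_2:
  "u \<in> lspan {commt t | t. P t} \<Longrightarrow> symm q u [x, y] = (1 - q y x) * u [x, y]"
  using lspan_commt_length_2_antisym[of u P x y] by (simp add: symm_length_2 algebra_simps)

lemma symm_brack_length_2:
  assumes "q x y * q y x = 1"
  shows "symm q (brack q t) [x, y] = 0"
proof (cases "length (leaves t) = 2")
  case True
  then obtain c d where "t = Node (Leaf c) (Leaf d)" using length_leaves_eq_2 by blast
  with assms show ?thesis
    by (simp only: symm_length_2 brack_Leaf_Leaf_length_2)
       (cases "c = x"; cases "d = y"; cases "c = y"; cases "d = x"; simp add: algebra_simps)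
next
  case False
  then have "brack q t [x, y] = 0" "brack q t [y, x] = 0"
    using brack_nonzero_mset mset_eq_length by (metis length_Cons list.size(3) numeral_2_eq_2)+
  then show ?thesis by (simp add: symm_length_2)
qed

lemma symm_lspan_brack_length_2:
  assumes "q x y * q y x = 1" and "v \<in> lspan {brack q t | t. P t}"
  shows "symm q v [x, y] = 0"
  using assms(2)
proof (induction v rule: lspan.induct)
  case lspan_zero
  then show ?case by (simp only: symm_tzero) (simp add: tzero_def)
next
  case (lspan_step a b c)
  then obtain t where "a = brack q t" by auto
  then have "symm q a [x, y] = 0" using symm_brack_length_2[of q x y, OF assms(1)] by simp
  with lspan_step show ?case by (simp only: symm_tadd symm_tsmul) (simp add: tadd_def tsmul_def)
qed

lemma symm_brack_Leaf_Leaf_length_2: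
  "symm q (brack q (Node (Leaf b) (Leaf a))) [a, b] = 1 - q a b * q b a"
  "a \<noteq> b \<Longrightarrow> symm q (brack q (Node (Leaf b) (Leaf a))) [b, a] = 0"
  by (simp_all only: symm_length_2 brack_Leaf_Leaf_length_2) (cases "a = b"; simp add: algebra_simps)+

lemma symm_commt_Leaf_Leaf_length_2:
  "a \<noteq> b \<Longrightarrow> symm q (commt (Node (Leaf a) (Leaf b))) [a, b] = 1 - q b a"
  by (simp only: symm_length_2 commt_Leaf_Leaf_length_2) simp

lemma symm_brack_in_NicholsL:
  "set (leaves t) \<subseteq> {..<n} \<Longrightarrow> symm q (brack q t) \<in> NicholsL q n"
  unfolding NicholsL_def by (blast intro: lspan_inc)

lemma symm_commt_in_NicholsLminus:
  "set (leaves t) \<subseteq> {..<n} \<Longrightarrow> symm q (commt t) \<in> NicholsLminus q n"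
  unfolding NicholsLminus_def by (blast intro: lspan_inc)

lemma symm_brack_in_commt_span_length_2:
  fixes q :: "nat \<Rightarrow> nat \<Rightarrow> 'a::field_char_0"
  assumes u: "u \<in> lspan {commt t | t. P t}"
    and eq: "symm q (brack q (Node (Leaf b) (Leaf a))) = symm q u"
  shows "q a b * q b a = 1 \<or> (a \<noteq> b \<and> q a b = 1)"
proof -
  have at_ab: "1 - q a b * q b a = (1 - q b a) * u [a, b]"
    using symm_brack_Leaf_Leaf_length_2(1)[of q b a] symm_lspan_commt_length_2[OF u] eq by simp
  show ?thesis
  proof (cases "a = b")
    case True
    then have "u [a, b] = 0" using lspan_commt_length_2_antisym[OF u, of a a] by simp
    then show ?thesis using at_ab by simp
  next
    case False
    have "(1 - q a b) * u [b, a] = 0"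
      using symm_brack_Leaf_Leaf_length_2(2)[OF False, of q] symm_lspan_commt_length_2[OF u, of q b a] eq
      by simp
    then have "q a b = 1 \<or> u [a, b] = 0" using lspan_commt_length_2_antisym[OF u, of b a] by simp
    then show ?thesis using at_ab False by auto
  qed
qed

lemma symm_commt_in_brack_span_length_2:
  assumes "q a b * q b a = 1" and "a \<noteq> b" and v: "v \<in> lspan {brack q t | t. P t}"
    and eq: "symm q (commt (Node (Leaf b) (Leaf a))) = symm q v"
  shows "q a b = 1"
proof -
  have "symm q v [b, a] = 0" using symm_lspan_brack_length_2[OF _ v] assms(1) by (simp add: mult.commute)
  then show ?thesis using symm_commt_Leaf_Leaf_length_2[of b a q] \<open>a \<noteq> b\<close> eq by simp
qed

lemma NicholsL_eq_NicholsLminus_imp_braiding: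
  fixes q :: "nat \<Rightarrow> nat \<Rightarrow> 'a::field_char_0"
  assumes eq: "NicholsL q n = NicholsLminus q n" and ab: "a < n" "b < n"
  shows "q a b * q b a = 1" and "a \<noteq> b \<Longrightarrow> q a b = 1"
proof -
  have bracket: "q a b * q b a = 1 \<or> (a \<noteq> b \<and> q a b = 1)" if "a < n" "b < n" for a b
    using symm_brack_in_NicholsL[of "Node (Leaf b) (Leaf a)" n q] that eq
    unfolding NicholsLminus_def by (auto dest: symm_brack_in_commt_span_length_2)
  show product: "q a b * q b a = 1"
    using bracket[OF ab] bracket[OF ab(2,1)] by (auto simp: mult.commute)
  assume "a \<noteq> b"
  then show "q a b = 1"
    using symm_commt_in_NicholsLminus[of "Node (Leaf b) (Leaf a)" n q] ab eq product
    unfolding NicholsL_def by (auto dest: symm_commt_in_brack_span_length_2)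
qed

section \<open>The coefficients of the symmetrizer\<close>

definition super_braiding :: "(nat \<Rightarrow> nat \<Rightarrow> 'a::comm_ring_1) \<Rightarrow> nat \<Rightarrow> bool" where
  "super_braiding q n \<longleftrightarrow>
     (\<forall>i<n. (q i i)^2 = 1) \<and> (\<forall>i<n. \<forall>j<n. i \<noteq> j \<longrightarrow> q i j = 1 \<and> q j i = 1)"

lemma super_braiding_sym: "super_braiding q n \<Longrightarrow> a < n \<Longrightarrow> b < n \<Longrightarrow> q a b = q b a"
  unfolding super_braiding_def by (cases "a = b") auto

lemma super_braiding_square: "super_braiding q n \<Longrightarrow> a < n \<Longrightarrow> b < n \<Longrightarrow> q a b * q a b = 1"
  unfolding super_braiding_def by (cases "a = b") (auto simp: power2_eq_square)

lemma super_braiding_diag: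
  fixes q :: "nat \<Rightarrow> nat \<Rightarrow> 'a::idom"
  shows "super_braiding q n \<Longrightarrow> a < n \<Longrightarrow> q a a = 1 \<or> q a a = -1"
  using super_braiding_square[of q n a a] by (simp add: square_eq_1_iff)

definition symm_coeff :: "(nat \<Rightarrow> nat \<Rightarrow> 'a::comm_ring_1) \<Rightarrow> nat list \<Rightarrow> (nat \<Rightarrow> nat) \<Rightarrow> 'a" where
  "symm_coeff q w \<sigma> = (\<Prod>(a,b)\<in>{(a,b). a < b \<and> b < length w \<and> \<sigma> b < \<sigma> a}. q (w ! \<sigma> a) (w ! \<sigma> b))"

lemma symm_eq_sum_symm_coeff:
  "symm q f w = (\<Sum>\<sigma> | \<sigma> permutes {..<length w}. symm_coeff q w \<sigma> * f (permute_list \<sigma> w))"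
  by (simp add: symm_def symm_coeff_def permute_list_def)

lemma symm_coeff_eq_prod_inversions:
  assumes p: "\<sigma> permutes {..<length w}"
  shows "symm_coeff q w \<sigma> =
    (\<Prod>(x,y)\<in>{(x,y). y < x \<and> x < length w \<and> inv \<sigma> x < inv \<sigma> y}. q (w!x) (w!y))"
  unfolding symm_coeff_def
proof (rule prod.reindex_bij_witness[where i = "\<lambda>(x,y). (inv \<sigma> x, inv \<sigma> y)" and j = "\<lambda>(a,b). (\<sigma> a, \<sigma> b)"])
  have inv: "\<And>x. \<sigma> (inv \<sigma> x) = x" "\<And>x. inv \<sigma> (\<sigma> x) = x" using permutes_inverses[OF p] by auto
  have im: "\<And>x. x < length w \<Longrightarrow> \<sigma> x < length w" "\<And>x. x < length w \<Longrightarrow> inv \<sigma> x < length w"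
    using permutes_in_image[OF p] permutes_in_image[OF permutes_inv[OF p]] by auto
  fix a assume "a \<in> {(a, b). a < b \<and> b < length w \<and> \<sigma> b < \<sigma> a}"
  then show "(case case a of (a, b) \<Rightarrow> (\<sigma> a, \<sigma> b) of (x, y) \<Rightarrow> (inv \<sigma> x, inv \<sigma> y)) = a"
    and "(case a of (a, b) \<Rightarrow> (\<sigma> a, \<sigma> b)) \<in> {(x, y). y < x \<and> x < length w \<and> inv \<sigma> x < inv \<sigma> y}"
    and "(case case a of (a, b) \<Rightarrow> (\<sigma> a, \<sigma> b) of (x, y) \<Rightarrow> q (w ! x) (w ! y)) =
         (case a of (a, b) \<Rightarrow> q (w ! \<sigma> a) (w ! \<sigma> b))"
    using inv im by auto
next
  have inv: "\<And>x. \<sigma> (inv \<sigma> x) = x" "\<And>x. inv \<sigma> (\<sigma> x) = x" using permutes_inverses[OF p] by auto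
  have im: "\<And>x. x < length w \<Longrightarrow> inv \<sigma> x < length w"
    using permutes_in_image[OF permutes_inv[OF p]] by auto
  fix b assume "b \<in> {(x, y). y < x \<and> x < length w \<and> inv \<sigma> x < inv \<sigma> y}"
  then show "(case case b of (x, y) \<Rightarrow> (inv \<sigma> x, inv \<sigma> y) of (a, b) \<Rightarrow> (\<sigma> a, \<sigma> b)) = b"
    and "(case b of (x, y) \<Rightarrow> (inv \<sigma> x, inv \<sigma> y)) \<in> {(a, b). a < b \<and> b < length w \<and> \<sigma> b < \<sigma> a}"
    using inv im by auto
qed

lemma prod_eq_prod_mult_prod_symmetric_difference:
  fixes W :: "'b \<Rightarrow> 'a::comm_ring_1"
  assumes fA: "finite A" and fB: "finite B" and sq: "\<And>x. x \<in> A \<Longrightarrow> W x * W x = 1"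
  shows "prod W B = prod W A * prod W ((A - B) \<union> (B - A))"
proof -
  have union: "prod W ((A - B) \<union> (B - A)) = prod W (A - B) * prod W (B - A)"
    by (rule prod.union_disjoint) (use fA fB in auto)
  have square: "prod W (A - B) * prod W (A - B) = 1"
    by (simp add: prod.distrib[symmetric] sq)
  have "prod W A * prod W ((A - B) \<union> (B - A))
      = prod W (A \<inter> B) * (prod W (A - B) * prod W (A - B)) * prod W (B - A)"
    by (simp add: prod.Int_Diff[OF fA, of W B] union algebra_simps)
  also have "\<dots> = prod W B" by (simp add: square prod.Int_Diff[OF fB, of W A] Int_commute)
  finally show ?thesis by simp
qed

lemma inversions_transpose:
  fixes p p' m :: nat
  assumes "p < p'" "p' < m"
  shows "{(x,y). y < x \<and> x < m \<and> transpose p p' x < transpose p p' y} =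
    insert (p', p) ((\<lambda>c. (c, p)) ` {p<..<p'} \<union> (\<lambda>c. (p', c)) ` {p<..<p'})"
  using assms by (auto simp: transpose_def split: if_splits)

text \<open>Pairs ordered by \<open>r\<close> on which the natural order and its twist by the involution \<open>\<tau>\<close>
  disagree correspond, after sorting each pair, to the inversions of \<open>\<tau>\<close>.\<close>
lemma prod_disagreement_eq_prod_inversions:
  fixes W :: "nat \<Rightarrow> nat \<Rightarrow> 'a::comm_ring_1" and r :: "nat \<Rightarrow> 'b::linorder"
  assumes inj: "inj_on r {..<m}" and invol: "\<And>z. \<tau> (\<tau> z) = z" and bound: "\<And>z. \<tau> z < m \<longleftrightarrow> z < m"
    and sym: "\<And>x y. x < m \<Longrightarrow> y < m \<Longrightarrow> W x y = W y x"
  shows "(\<Prod>(x,y)\<in>{(x,y). x < m \<and> y < m \<and> r x < r y \<and> ((y < x) \<noteq> (\<tau> y < \<tau> x))}. W x y) =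
    (\<Prod>(x,y)\<in>{(x,y). y < x \<and> x < m \<and> \<tau> x < \<tau> y}. W x y)"
proof (rule prod.reindex_bij_witness[where i = "\<lambda>(x,y). if r x < r y then (x,y) else (y,x)"
      and j = "\<lambda>(x,y). if y < x then (x,y) else (y,x)"])
  fix a assume "a \<in> {(x,y). x < m \<and> y < m \<and> r x < r y \<and> ((y < x) \<noteq> (\<tau> y < \<tau> x))}"
  then obtain x y where a: "a = (x,y)" "x < m" "y < m" "r x < r y" "(y < x) \<noteq> (\<tau> y < \<tau> x)"
    by auto
  have "x \<noteq> y" using a(5) by auto
  then have "\<tau> x \<noteq> \<tau> y" using invol by metis
  with a sym show "(case (case a of (x, y) \<Rightarrow> if y < x then (x, y) else (y, x)) of
          (x, y) \<Rightarrow> if r x < r y then (x, y) else (y, x)) = a"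
    and "(case a of (x, y) \<Rightarrow> if y < x then (x, y) else (y, x)) \<in> {(x,y). y < x \<and> x < m \<and> \<tau> x < \<tau> y}"
    and "(case case a of (x, y) \<Rightarrow> if y < x then (x, y) else (y, x) of (x, y) \<Rightarrow> W x y) =
         (case a of (x, y) \<Rightarrow> W x y)"
    by (auto simp: not_less_iff_gr_or_eq)
next
  fix b assume "b \<in> {(x,y). y < x \<and> x < m \<and> \<tau> x < \<tau> y}"
  then obtain x y where b: "b = (x,y)" "y < x" "x < m" "\<tau> x < \<tau> y" by auto
  have "r x \<noteq> r y" using inj b by (metis inj_on_def lessThan_iff less_trans order_less_irrefl)
  with b show "(case case b of (x, y) \<Rightarrow> if r x < r y then (x, y) else (y, x) of
          (x, y) \<Rightarrow> if y < x then (x, y) else (y, x)) = b"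
    and "(case b of (x, y) \<Rightarrow> if r x < r y then (x, y) else (y, x))
      \<in> {(x,y). x < m \<and> y < m \<and> r x < r y \<and> ((y < x) \<noteq> (\<tau> y < \<tau> x))}"
    by (auto simp: not_less_iff_gr_or_eq)
qed

lemma transpose_less_iff: "p < m \<Longrightarrow> p' < m \<Longrightarrow> transpose p p' z < m \<longleftrightarrow> z < m"
  by (auto simp: transpose_def)

lemma prod_inversions_transpose_eq_neg:
  fixes W :: "nat \<Rightarrow> nat \<Rightarrow> 'a::comm_ring_1" and r :: "nat \<Rightarrow> 'b::linorder"
  assumes inj: "inj_on r {..<m}" and pp: "p < p'" "p' < m"
    and sym: "\<And>x y. x < m \<Longrightarrow> y < m \<Longrightarrow> W x y = W y x"
    and sq: "\<And>x y. x < m \<Longrightarrow> y < m \<Longrightarrow> W x y * W x y = 1"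
    and neg: "W p' p = -1"
    and mid: "\<And>c. p < c \<Longrightarrow> c < p' \<Longrightarrow> W c p * W p' c = 1"
  shows "(\<Prod>(x,y)\<in>{(x,y). transpose p p' y < transpose p p' x \<and> x < m \<and> r x < r y}. W x y)
       = - (\<Prod>(x,y)\<in>{(x,y). y < x \<and> x < m \<and> r x < r y}. W x y)"
proof -
  define \<tau> where "\<tau> = transpose p p'"
  have bound: "\<And>z. \<tau> z < m \<longleftrightarrow> z < m" unfolding \<tau>_def using transpose_less_iff[of p m p'] pp by auto
  define A where "A = {(x,y). y < x \<and> x < m \<and> r x < r y}"
  define B where "B = {(x,y). \<tau> y < \<tau> x \<and> x < m \<and> r x < r y}"
  have A_sub: "A \<subseteq> {..<m} \<times> {..<m}" unfolding A_def by auto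
  have B_sub: "B \<subseteq> {..<m} \<times> {..<m}"
    unfolding B_def using bound by clarsimp (meson less_trans)
  have "finite A" "finite B" using A_sub B_sub by (auto intro: finite_subset)
  then have "prod (case_prod W) B = prod (case_prod W) A * prod (case_prod W) ((A - B) \<union> (B - A))"
    by (rule prod_eq_prod_mult_prod_symmetric_difference) (use A_sub sq in auto)
  moreover have "(A - B) \<union> (B - A) = {(x,y). x < m \<and> y < m \<and> r x < r y \<and> ((y < x) \<noteq> (\<tau> y < \<tau> x))}"
    using A_sub B_sub unfolding A_def B_def by auto
  moreover have "(\<Prod>(x,y)\<in>{(x,y). x < m \<and> y < m \<and> r x < r y \<and> ((y < x) \<noteq> (\<tau> y < \<tau> x))}. W x y)
      = (\<Prod>(x,y)\<in>{(x,y). y < x \<and> x < m \<and> \<tau> x < \<tau> y}. W x y)"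
    by (rule prod_disagreement_eq_prod_inversions[OF inj _ bound sym]) (simp_all add: \<tau>_def)
  moreover have "(\<Prod>(x,y)\<in>{(x,y). y < x \<and> x < m \<and> \<tau> x < \<tau> y}. W x y)
      = W p' p * ((\<Prod>c\<in>{p<..<p'}. W c p) * (\<Prod>c\<in>{p<..<p'}. W p' c))"
  proof -
    have "prod (case_prod W) ((\<lambda>c. (c, p)) ` {p<..<p'} \<union> (\<lambda>c. (p', c)) ` {p<..<p'}) =
        prod (case_prod W) ((\<lambda>c. (c, p)) ` {p<..<p'}) * prod (case_prod W) ((\<lambda>c. (p', c)) ` {p<..<p'})"
      by (rule prod.union_disjoint) auto
    then show ?thesis
      unfolding \<tau>_def inversions_transpose[OF pp]
      by (subst prod.insert) (auto simp: prod.reindex inj_on_def)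
  qed
  moreover have "\<dots> = -1" using neg mid by (simp add: prod.distrib[symmetric])
  ultimately show ?thesis unfolding A_def B_def \<tau>_def by simp
qed

lemma nth_transpose_eq: "w ! p = w ! p' \<Longrightarrow> w ! (transpose p p' z) = w ! z"
  by (auto simp: transpose_def)

lemma symm_coeff_transpose_compose:
  assumes p: "\<sigma> permutes {..<length w}" and pp: "p < length w" "p' < length w"
    and eq: "w ! p = w ! p'"
  shows "symm_coeff q w (transpose p p' \<circ> \<sigma>) =
    (\<Prod>(x,y)\<in>{(x,y). transpose p p' y < transpose p p' x \<and> x < length w \<and> inv \<sigma> x < inv \<sigma> y}.
      q (w!x) (w!y))"
proof -
  let ?t = "transpose p p'"
  have t_permutes: "?t permutes {..<length w}" using pp by (simp add: permutes_swap_id)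
  have "inv (?t \<circ> \<sigma>) = inv \<sigma> \<circ> ?t"
    using o_inv_distrib[of ?t \<sigma>] permutes_bij[OF t_permutes] permutes_bij[OF p] by simp
  then have "symm_coeff q w (?t \<circ> \<sigma>) =
      (\<Prod>(x,y)\<in>{(x,y). y < x \<and> x < length w \<and> inv \<sigma> (?t x) < inv \<sigma> (?t y)}. q (w!x) (w!y))"
    using symm_coeff_eq_prod_inversions[OF permutes_compose[OF p t_permutes]] by simp
  also have "\<dots> = (\<Prod>(x,y)\<in>{(x,y). ?t y < ?t x \<and> x < length w \<and> inv \<sigma> x < inv \<sigma> y}. q (w!x) (w!y))"
  proof (rule prod.reindex_bij_witness[where i = "\<lambda>(x,y). (?t x, ?t y)" and j = "\<lambda>(x,y). (?t x, ?t y)"])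
    fix a assume a: "a \<in> {(x,y). y < x \<and> x < length w \<and> inv \<sigma> (?t x) < inv \<sigma> (?t y)}"
    show "(case case a of (x, y) \<Rightarrow> (?t x, ?t y) of (x, y) \<Rightarrow> (?t x, ?t y)) = a" by (cases a) simp
    obtain x y where x: "a = (x,y)" "y < x" "x < length w" "inv \<sigma> (?t x) < inv \<sigma> (?t y)" using a by blast
    have "?t (?t y) < ?t (?t x)" "?t x < length w" using x(2,3) transpose_less_iff[OF pp] by simp_all
    then show "(case a of (x, y) \<Rightarrow> (?t x, ?t y)) \<in> {(x,y). ?t y < ?t x \<and> x < length w \<and> inv \<sigma> x < inv \<sigma> y}"
      using x(4) unfolding x(1) by (simp only: case_prod_conv mem_Collect_eq)
    show "(case case a of (x, y) \<Rightarrow> (?t x, ?t y) of (x, y) \<Rightarrow> q (w ! x) (w ! y)) =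
        (case a of (x, y) \<Rightarrow> q (w ! x) (w ! y))"
      using nth_transpose_eq[OF eq] by (cases a) simp
  next
    fix b assume b: "b \<in> {(x,y). ?t y < ?t x \<and> x < length w \<and> inv \<sigma> x < inv \<sigma> y}"
    show "(case case b of (x, y) \<Rightarrow> (?t x, ?t y) of (x, y) \<Rightarrow> (?t x, ?t y)) = b" by (cases b) simp
    obtain x y where x: "b = (x,y)" "?t y < ?t x" "x < length w" "inv \<sigma> x < inv \<sigma> y" using b by blast
    have "?t (?t x) = x" "?t (?t y) = y" "?t x < length w" using x(3) transpose_less_iff[OF pp] by simp_all
    then show "(case b of (x, y) \<Rightarrow> (?t x, ?t y)) \<in> {(x,y). y < x \<and> x < length w \<and> inv \<sigma> (?t x) < inv \<sigma> (?t y)}"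
      using x(2,4) unfolding x(1) by simp
  qed
  finally show ?thesis .
qed

text \<open>Swapping two occurrences of a letter \<open>a\<close> with \<open>q a a = -1\<close> flips the sign of the
  coefficient: the pair itself contributes \<open>q a a\<close>, and each letter between them contributes
  two equal factors whose product is \<open>1\<close>.\<close>
lemma symm_coeff_transpose_compose_eq_neg:
  fixes q :: "nat \<Rightarrow> nat \<Rightarrow> 'a::field"
  assumes q: "super_braiding q n" and w: "set w \<subseteq> {..<n}"
    and p: "\<sigma> permutes {..<length w}" and pp: "p < p'" "p' < length w" and eq: "w ! p = w ! p'"
    and odd: "q (w ! p) (w ! p) = -1"
  shows "symm_coeff q w (transpose p p' \<circ> \<sigma>) = - symm_coeff q w \<sigma>"
proof -
  have letters: "\<And>x. x < length w \<Longrightarrow> w ! x < n" using w nth_mem by blast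
  have inj: "inj_on (inv \<sigma>) {..<length w}"
    using permutes_inj[OF permutes_inv[OF p]] by (simp add: inj_on_def inj_def)
  have "symm_coeff q w (transpose p p' \<circ> \<sigma>) =
      (\<Prod>(x,y)\<in>{(x,y). transpose p p' y < transpose p p' x \<and> x < length w \<and> inv \<sigma> x < inv \<sigma> y}.
        q (w!x) (w!y))"
    by (rule symm_coeff_transpose_compose[OF p _ pp(2) eq]) (use pp in simp)
  also have "\<dots> = - (\<Prod>(x,y)\<in>{(x,y). y < x \<and> x < length w \<and> inv \<sigma> x < inv \<sigma> y}. q (w!x) (w!y))"
    using inj pp
  proof (rule prod_inversions_transpose_eq_neg)
    show "q (w ! x) (w ! y) = q (w ! y) (w ! x)" "q (w ! x) (w ! y) * q (w ! x) (w ! y) = 1"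
      if "x < length w" "y < length w" for x y
      using super_braiding_sym[OF q] super_braiding_square[OF q] letters that by blast+
    show "q (w ! p') (w ! p) = - 1" using odd eq by simp
    show "q (w ! c) (w ! p) * q (w ! p') (w ! c) = 1" if "p < c" "c < p'" for c
    proof -
      have "c < length w" "p < length w" using that pp by simp_all
      then show ?thesis
        using super_braiding_sym[OF q] super_braiding_square[OF q] letters eq pp(2) by metis
    qed
  qed
  also have "\<dots> = - symm_coeff q w \<sigma>" by (simp only: symm_coeff_eq_prod_inversions[OF p])
  finally show ?thesis .
qed

definition repeats_odd_letter :: "(nat \<Rightarrow> nat \<Rightarrow> 'a::comm_ring_1) \<Rightarrow> nat list \<Rightarrow> bool" where
  "repeats_odd_letter q w \<longleftrightarrow> (\<exists>p p'. p < p' \<and> p' < length w \<and> w ! p = w ! p' \<and> q (w ! p) (w ! p) = -1)"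

lemma repeats_odd_letterI:
  "i \<noteq> j \<Longrightarrow> i < length w \<Longrightarrow> j < length w \<Longrightarrow> w ! i = w ! j \<Longrightarrow> q (w ! i) (w ! i) = -1
    \<Longrightarrow> repeats_odd_letter q w"
  unfolding repeats_odd_letter_def by (metis linorder_neqE_nat)

lemma symm_repeats_odd_letter_eq_0:
  fixes q :: "nat \<Rightarrow> nat \<Rightarrow> 'a::field_char_0"
  assumes q: "super_braiding q n" and w: "set w \<subseteq> {..<n}" and rep: "repeats_odd_letter q w"
  shows "symm q f w = 0"
proof -
  obtain p p' where pp: "p < p'" "p' < length w" and eq: "w ! p = w ! p'"
    and odd: "q (w ! p) (w ! p) = -1"
    using rep unfolding repeats_odd_letter_def by blast
  let ?t = "transpose p p'"
  let ?P = "{\<sigma>. \<sigma> permutes {..<length w}}"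
  let ?F = "\<lambda>\<sigma>. symm_coeff q w \<sigma> * f (permute_list \<sigma> w)"
  have "?t permutes {..<length w}" using pp by (simp add: permutes_swap_id)
  then have "sum ?F ?P = sum (\<lambda>\<sigma>. ?F (?t \<circ> \<sigma>)) ?P" by (rule setum_permutations_compose_left)
  also have "\<dots> = sum (\<lambda>\<sigma>. - ?F \<sigma>) ?P"
  proof (rule sum.cong[OF refl])
    fix \<sigma> assume "\<sigma> \<in> ?P"
    moreover have "permute_list (?t \<circ> \<sigma>) w = permute_list \<sigma> w"
      unfolding permute_list_def using nth_transpose_eq[OF eq] by simp
    ultimately show "?F (?t \<circ> \<sigma>) = - ?F \<sigma>"
      using symm_coeff_transpose_compose_eq_neg[OF q w _ pp eq odd] by simp
  qed
  also have "\<dots> = - sum ?F ?P" by (simp add: sum_negf)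
  finally show ?thesis by (simp add: symm_eq_sum_symm_coeff)
qed

lemma symm_coeff_eq_1:
  fixes q :: "nat \<Rightarrow> nat \<Rightarrow> 'a::field"
  assumes q: "super_braiding q n" and w: "set w \<subseteq> {..<n}" and no_rep: "\<not> repeats_odd_letter q w"
    and p: "\<sigma> permutes {..<length w}"
  shows "symm_coeff q w \<sigma> = 1"
  unfolding symm_coeff_def
proof (rule prod.neutral, clarify)
  fix a b assume ab: "a < b" "b < length w" "\<sigma> b < \<sigma> a"
  have letters: "\<And>x. x < length w \<Longrightarrow> w ! x < n" using w nth_mem by blast
  have im: "\<sigma> a < length w" "\<sigma> b < length w" using permutes_in_image[OF p] ab by auto
  show "q (w ! \<sigma> a) (w ! \<sigma> b) = 1"
  proof (cases "w ! \<sigma> a = w ! \<sigma> b")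
    case True
    then have "q (w ! \<sigma> a) (w ! \<sigma> a) \<noteq> -1"
      using no_rep repeats_odd_letterI[of "\<sigma> a" "\<sigma> b" w q] im ab(3) by auto
    then show ?thesis using super_braiding_diag[OF q letters[OF im(1)]] True by auto
  next
    case False
    then show ?thesis using q letters im unfolding super_braiding_def by blast
  qed
qed

lemma symm_eq_sum_permutations:
  fixes q :: "nat \<Rightarrow> nat \<Rightarrow> 'a::field"
  assumes "super_braiding q n" and "set w \<subseteq> {..<n}" and "\<not> repeats_odd_letter q w"
  shows "symm q f w = (\<Sum>\<sigma> | \<sigma> permutes {..<length w}. f (permute_list \<sigma> w))"
  unfolding symm_eq_sum_symm_coeff by (rule sum.cong[OF refl]) (simp add: symm_coeff_eq_1[OF assms])

lemma symm_eq_0_outside_letters: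
  assumes "\<And>v. f v \<noteq> 0 \<Longrightarrow> set v \<subseteq> {..<n}" and "\<not> set w \<subseteq> {..<n}"
  shows "symm q f w = 0"
  unfolding symm_eq_sum_symm_coeff
proof (rule sum.neutral, rule ballI)
  fix \<sigma> assume "\<sigma> \<in> {\<sigma>. \<sigma> permutes {..<length w}}"
  then have "set (permute_list \<sigma> w) = set w" by simp
  then have "f (permute_list \<sigma> w) = 0" using assms by metis
  then show "symm_coeff q w \<sigma> * f (permute_list \<sigma> w) = 0" by simp
qed

lemma rotation_permutes:
  fixes k m :: nat
  assumes k: "k < m"
  shows "(\<lambda>a. if a < m then (k + a) mod m else a) permutes {..<m}"
proof (rule bij_imp_permutes)
  let ?r = "\<lambda>a. if a < m then (k + a) mod m else a"
  have mod_eq: "(k + a) mod m = (if k + a < m then k + a else k + a - m)" if "a < m" for a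
    using that k by (simp add: le_mod_geq)
  have inj: "inj_on ?r {..<m}"
  proof (rule inj_onI)
    fix a b assume "a \<in> {..<m}" "b \<in> {..<m}" "?r a = ?r b"
    then show "a = b" using mod_eq[of a] mod_eq[of b] k by (simp split: if_splits)
  qed
  moreover have "?r ` {..<m} \<subseteq> {..<m}" using k by auto
  ultimately show "bij_betw ?r {..<m} {..<m}"
    unfolding bij_betw_def using endo_inj_surj[of "{..<m}" ?r] by simp
qed simp

lemma permute_list_rotation:
  assumes "length v = m" and "k < m"
  shows "permute_list (\<lambda>a. if a < m then (k + a) mod m else a) v = rotate k v"
proof (rule nth_equalityI)
  have rot: "(\<lambda>a. if a < m then (k + a) mod m else a) permutes {..<length v}"
    using rotation_permutes assms by simp
  fix i assume "i < length (permute_list (\<lambda>a. if a < m then (k + a) mod m else a) v)"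
  then have "i < length v" by simp
  then show "permute_list (\<lambda>a. if a < m then (k + a) mod m else a) v ! i = rotate k v ! i"
    using permute_list_nth[OF rot] nth_rotate[of i v k] assms by simp
qed simp

lemma sum_permutations_rotate:
  assumes "k < length w"
  shows "(\<Sum>\<sigma> | \<sigma> permutes {..<length w}. H (permute_list \<sigma> w)) =
    (\<Sum>\<sigma> | \<sigma> permutes {..<length w}. H (rotate k (permute_list \<sigma> w)))"
proof -
  define \<rho> where "\<rho> = (\<lambda>a. if a < length w then (k + a) mod length w else a)"
  have \<rho>: "\<rho> permutes {..<length w}" unfolding \<rho>_def using rotation_permutes assms by blast
  have "(\<Sum>\<sigma> | \<sigma> permutes {..<length w}. H (permute_list \<sigma> w)) =
      (\<Sum>\<sigma> | \<sigma> permutes {..<length w}. H (permute_list (\<sigma> \<circ> \<rho>) w))"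
    by (rule sum_permutations_compose_right[OF \<rho>])
  also have "\<dots> = (\<Sum>\<sigma> | \<sigma> permutes {..<length w}. H (rotate k (permute_list \<sigma> w)))"
  proof (rule sum.cong[OF refl])
    fix \<sigma> assume "\<sigma> \<in> {\<sigma>. \<sigma> permutes {..<length w}}"
    then have "permute_list (\<sigma> \<circ> \<rho>) w = permute_list \<rho> (permute_list \<sigma> w)"
      using permute_list_compose[OF \<rho>] by simp
    also have "\<dots> = rotate k (permute_list \<sigma> w)"
      unfolding \<rho>_def by (rule permute_list_rotation) (simp_all add: assms)
    finally show "H (permute_list (\<sigma> \<circ> \<rho>) w) = H (rotate k (permute_list \<sigma> w))" by simp
  qed
  finally show ?thesis .
qed

lemma sum_permutations_tmul_commute:
  fixes f g :: "'a::comm_ring_1 tens"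
  shows "(\<Sum>\<sigma> | \<sigma> permutes {..<length w}. tmul f g (permute_list \<sigma> w)) =
    (\<Sum>\<sigma> | \<sigma> permutes {..<length w}. tmul g f (permute_list \<sigma> w))"
proof -
  let ?P = "{\<sigma>. \<sigma> permutes {..<length w}}"
  let ?m = "length w"
  have split_swap: "(\<Sum>\<sigma>\<in>?P. f (take k (permute_list \<sigma> w)) * g (drop k (permute_list \<sigma> w))) =
      (\<Sum>\<sigma>\<in>?P. g (take (?m - k) (permute_list \<sigma> w)) * f (drop (?m - k) (permute_list \<sigma> w)))"
    if "k \<le> ?m" for k
  proof (cases "0 < k \<and> k < ?m")
    case True
    have "rotate k v = drop k v @ take k v" if "length v = ?m" for v :: "nat list"
      using rotate_drop_take[of k v] True that by simp
    then show ?thesis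
      using sum_permutations_rotate[of k w "\<lambda>v. g (take (?m - k) v) * f (drop (?m - k) v)"] True
      by (simp add: mult.commute)
  next
    case False
    with that have "k = 0 \<or> k = ?m" by auto
    then show ?thesis by (auto simp: mult.commute)
  qed
  have "(\<Sum>\<sigma>\<in>?P. tmul f g (permute_list \<sigma> w)) =
      (\<Sum>k\<in>{0..?m}. \<Sum>\<sigma>\<in>?P. f (take k (permute_list \<sigma> w)) * g (drop k (permute_list \<sigma> w)))"
    by (simp add: tmul_def atMost_atLeast0 sum.swap[of _ ?P])
  also have "\<dots> = (\<Sum>k\<in>{0..?m}. \<Sum>\<sigma>\<in>?P. g (take (?m - k) (permute_list \<sigma> w)) * f (drop (?m - k) (permute_list \<sigma> w)))"
    using split_swap by simp
  also have "\<dots> = (\<Sum>k\<in>{0..?m}. \<Sum>\<sigma>\<in>?P. g (take k (permute_list \<sigma> w)) * f (drop k (permute_list \<sigma> w)))"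
    using sum.atLeastAtMost_rev[of "\<lambda>k. \<Sum>\<sigma>\<in>?P. g (take k (permute_list \<sigma> w)) * f (drop k (permute_list \<sigma> w))" 0 ?m]
    by simp
  also have "\<dots> = (\<Sum>\<sigma>\<in>?P. tmul g f (permute_list \<sigma> w))"
    by (simp add: tmul_def atMost_atLeast0 sum.swap[of _ ?P])
  finally show ?thesis .
qed

section \<open>Vanishing of brackets of degree at least two\<close>

lemma symm_tmul_commute:
  fixes q :: "nat \<Rightarrow> nat \<Rightarrow> 'a::field_char_0"
  assumes q: "super_braiding q n" and w: "set w \<subseteq> {..<n}"
  shows "symm q (tmul f g) w = symm q (tmul g f) w"
proof (cases "repeats_odd_letter q w")
  case False
  show ?thesis
    unfolding symm_eq_sum_permutations[OF q w False] by (rule sum_permutations_tmul_commute)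
qed (simp add: symm_repeats_odd_letter_eq_0[OF q w])

lemma symm_tmul_shared_odd_letter_eq_0:
  fixes q :: "nat \<Rightarrow> nat \<Rightarrow> 'a::field_char_0"
  assumes q: "super_braiding q n" and w: "set w \<subseteq> {..<n}" and odd: "q a a = -1"
    and f: "\<And>v. f v \<noteq> 0 \<Longrightarrow> a \<in> set v" and g: "\<And>v. g v \<noteq> 0 \<Longrightarrow> a \<in> set v"
  shows "symm q (tmul f g) w = 0"
proof (cases "repeats_odd_letter q w")
  case False
  have "tmul f g (permute_list \<sigma> w) = 0" if p: "\<sigma> permutes {..<length w}" for \<sigma>
  proof (rule ccontr)
    let ?v = "permute_list \<sigma> w"
    assume "tmul f g ?v \<noteq> 0"
    then obtain k where k: "k \<le> length ?v" "f (take k ?v) \<noteq> 0" "g (drop k ?v) \<noteq> 0"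
      using tmul_nonzeroD by blast
    obtain i where i: "i < length (take k ?v)" "take k ?v ! i = a"
      using f[OF k(2)] by (metis in_set_conv_nth)
    obtain j where j: "j < length (drop k ?v)" "drop k ?v ! j = a"
      using g[OF k(3)] by (metis in_set_conv_nth)
    have ij: "i < length w" "k + j < length w" "i < k + j" using i j k by auto
    have "w ! \<sigma> i = a" "w ! \<sigma> (k + j) = a"
      using i j k permute_list_nth[OF p ij(1)] permute_list_nth[OF p ij(2)] by auto
    moreover have "\<sigma> i \<noteq> \<sigma> (k + j)" using permutes_inj[OF p] ij(3) by (metis inj_eq less_irrefl)
    moreover have "\<sigma> i < length w" "\<sigma> (k + j) < length w" using permutes_in_image[OF p] ij by auto
    ultimately have "repeats_odd_letter q w" using odd repeats_odd_letterI by metis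
    with False show False by simp
  qed
  then show ?thesis by (simp add: symm_eq_sum_permutations[OF q w False])
qed (rule symm_repeats_odd_letter_eq_0[OF q w])

lemma super_braiding_chi_neq_1:
  fixes q :: "nat \<Rightarrow> nat \<Rightarrow> 'a::field"
  assumes q: "super_braiding q n" and r: "set (leaves r) \<subseteq> {..<n}" and s: "set (leaves s) \<subseteq> {..<n}"
    and chi: "chi q r s \<noteq> 1"
  obtains a where "a \<in> set (leaves r)" "a \<in> set (leaves s)" "q a a = -1"
proof -
  have "\<exists>x\<in>set [q a b. a \<leftarrow> leaves r, b \<leftarrow> leaves s]. x \<noteq> 1"
  proof (rule ccontr)
    assume "\<not> ?thesis"
    moreover have "prod_list xs = 1" if "\<forall>x\<in>set xs. x = 1" for xs :: "'a list"
      using that by (induction xs) auto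
    ultimately have "prod_list [q a b. a \<leftarrow> leaves r, b \<leftarrow> leaves s] = 1" by blast
    with chi show False unfolding chi_def by simp
  qed
  then obtain a b where ab: "a \<in> set (leaves r)" "b \<in> set (leaves s)" "q a b \<noteq> 1" by auto
  moreover have "a < n" "b < n" using ab r s by auto
  ultimately have "a = b" using q unfolding super_braiding_def by blast
  with ab \<open>a < n\<close> show ?thesis using that super_braiding_diag[OF q] by blast
qed

lemma brack_nonzero_set: "brack q t v \<noteq> 0 \<Longrightarrow> set v = set (leaves t)"
  using brack_nonzero_mset by (metis set_mset_mset)

lemma commt_nonzero_set: "(commt t :: 'a::comm_ring_1 tens) v \<noteq> 0 \<Longrightarrow> set v = set (leaves t)"
  using commt_nonzero_mset by (metis set_mset_mset)

lemma symm_brack_Node_eq_0: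
  fixes q :: "nat \<Rightarrow> nat \<Rightarrow> 'a::field_char_0"
  assumes q: "super_braiding q n" and leaves: "set (leaves (Node s r)) \<subseteq> {..<n}"
  shows "symm q (brack q (Node s r)) = tzero"
proof
  fix w
  show "symm q (brack q (Node s r)) w = tzero w"
  proof (cases "set w \<subseteq> {..<n}")
    case True
    have "symm q (brack q (Node s r)) w =
        symm q (tmul (brack q r) (brack q s)) w - chi q r s * symm q (tmul (brack q s) (brack q r)) w"
      by (simp only: brack.simps symm_tadd symm_tsmul) (simp add: tadd_def tsmul_def)
    also have "\<dots> = (1 - chi q r s) * symm q (tmul (brack q s) (brack q r)) w"
      using symm_tmul_commute[OF q True] by (simp add: algebra_simps)
    also have "\<dots> = 0"
    proof (cases "chi q r s = 1")
      case False
      then obtain a where "a \<in> set (leaves r)" "a \<in> set (leaves s)" "q a a = -1"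
        using super_braiding_chi_neq_1[OF q] leaves by auto
      then have "symm q (tmul (brack q s) (brack q r)) w = 0"
        using symm_tmul_shared_odd_letter_eq_0[OF q True, of a "brack q s" "brack q r"] brack_nonzero_set by blast
      then show ?thesis by simp
    qed simp
    finally show ?thesis by (simp add: tzero_def)
  next
    case False
    have "set v \<subseteq> {..<n}" if "brack q (Node s r) v \<noteq> 0" for v
      using brack_nonzero_set[OF that] leaves by simp
    then have "symm q (brack q (Node s r)) w = 0"
      using False by (rule symm_eq_0_outside_letters)
    then show ?thesis by (simp add: tzero_def)
  qed
qed

lemma symm_commt_Node_eq_0:
  fixes q :: "nat \<Rightarrow> nat \<Rightarrow> 'a::field_char_0"
  assumes q: "super_braiding q n" and leaves: "set (leaves (Node s r)) \<subseteq> {..<n}"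
  shows "symm q (commt (Node s r)) = tzero"
proof
  fix w
  show "symm q (commt (Node s r)) w = tzero w"
  proof (cases "set w \<subseteq> {..<n}")
    case True
    then show ?thesis
      using symm_tmul_commute[OF q True, of "commt s" "commt r"]
      by (simp only: commt.simps symm_tadd symm_tsmul) (simp add: tadd_def tsmul_def tzero_def)
  next
    case False
    have "set v \<subseteq> {..<n}" if "(commt (Node s r) :: 'a tens) v \<noteq> 0" for v
      using commt_nonzero_set[OF that] leaves by simp
    then have "symm q (commt (Node s r)) w = 0"
      using False by (rule symm_eq_0_outside_letters)
    then show ?thesis by (simp add: tzero_def)
  qed
qed

lemma symm_lspan_trees_eq_NicholsV:
  assumes leaf: "\<And>i. F (Leaf i) = gen i"
    and node: "\<And>s r. set (leaves (Node s r)) \<subseteq> {..<n} \<Longrightarrow> symm q (F (Node s r)) = tzero"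
  shows "symm q ` lspan {F t | t. set (leaves t) \<subseteq> {..<n}} = NicholsV q n"
proof -
  let ?trees = "symm q ` {F t | t. set (leaves t) \<subseteq> {..<n}}"
  let ?gens = "symm q ` {gen i | i. i < n}"
  have "?trees \<subseteq> lspan ?gens"
  proof
    fix x assume "x \<in> ?trees"
    then obtain t where t: "set (leaves t) \<subseteq> {..<n}" "x = symm q (F t)" by blast
    show "x \<in> lspan ?gens"
    proof (cases t)
      case (Leaf i)
      with t have "x \<in> ?gens" using leaf by auto
      then show ?thesis by (rule lspan_inc)
    next
      case (Node s r)
      with t have "x = tzero" using node by simp
      then show ?thesis by (simp add: lspan.lspan_zero)
    qed
  qed
  moreover have "?gens \<subseteq> lspan ?trees"
  proof
    fix x assume "x \<in> ?gens"
    then obtain i where i: "i < n" "x = symm q (gen i)" by blast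
    then have "x = symm q (F (Leaf i))" "set (leaves (Leaf i)) \<subseteq> {..<n}" using leaf by simp_all
    then have "x \<in> ?trees" by blast
    then show "x \<in> lspan ?trees" by (rule lspan_inc)
  qed
  ultimately have "lspan ?trees = lspan ?gens"
    by (intro equalityI lspan_subset_lspan)
  then show ?thesis by (simp only: NicholsV_def symm_image_lspan)
qed

theorem proposition6p3:
  fixes q :: "nat \<Rightarrow> nat \<Rightarrow> 'a::field_char_0" and n :: nat
  assumes "alg_closed TYPE('a)"
    and "\<forall>i<n. \<forall>j<n. q i j \<noteq> 0"
  shows "(NicholsL q n = NicholsLminus q n \<longleftrightarrow>
           ((\<forall>i<n. (q i i)^2 = 1) \<and> (\<forall>i<n. \<forall>j<n. i \<noteq> j \<longrightarrow> q i j = 1 \<and> q j i = 1)))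
       \<and> (NicholsL q n = NicholsLminus q n \<longrightarrow>
           NicholsL q n = NicholsV q n \<and> NicholsLminus q n = NicholsV q n)"
proof -
  have necessary: "super_braiding q n" if "NicholsL q n = NicholsLminus q n"
    using NicholsL_eq_NicholsLminus_imp_braiding[OF that]
    unfolding super_braiding_def by (metis power2_eq_square)
  have sufficient: "NicholsL q n = NicholsV q n" "NicholsLminus q n = NicholsV q n"
    if "super_braiding q n"
    unfolding NicholsL_def NicholsLminus_def
    using symm_brack_Node_eq_0[OF that] symm_commt_Node_eq_0[OF that]
    by (auto intro!: symm_lspan_trees_eq_NicholsV)
  show ?thesis
    using necessary sufficient unfolding super_braiding_def by metis
qed

end
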